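(* If $U$ is a unicyclic graph, then every nontrivial 2-switch between two edges of $\operatorname{Cycles}(U)$ is a p-switch over $U$.
   Context: Graphs are finite, simple, undirected, labeled. A unicyclic graph is a connected graph with exactly one cycle; a pseudoforest is a graph each of whose components is a tree or a unicyclic graph. For vertices $a,b,c,d$, $A=\binom{a\ b}{c\ d}$ is interchangeable in $G$ if $ab,cd\in E(G)$, $\{a,b\}\cap\{c,d\}=\varnothing$, $ac,bd\notin E(G)$; the 2-switch $\tau_A$ sends $G$ to $G-ab-cd+ac+bd$ if $A$ is interchangeable and to $G$ otherwise (trivial); a 2-switch between edges $ab,cd$ is $\tau_A$ with $A=\binom{a\ b}{c\ d}$. A nontrivial 2-switch $\tau$ over a pseudoforest $G$ is a p-switch if $\tau(G)$ is a pseudoforest. $\operatorname{Cycles}(H)$ is the subgraph induced by vertices lying on some cycle of $H$. *)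

theory Defs
  imports Main
begin

type_synonym 'a graph = "'a set \<times> 'a set set"

definition graph :: "'a graph \<Rightarrow> bool" where
  "graph G \<longleftrightarrow> finite (fst G) \<and>
     (\<forall>e\<in>snd G. \<exists>x y. x \<noteq> y \<and> e = {x, y} \<and> x \<in> fst G \<and> y \<in> fst G)"

definition adj :: "'a graph \<Rightarrow> 'a \<Rightarrow> 'a \<Rightarrow> bool" where
  "adj G x y \<longleftrightarrow> {x, y} \<in> snd G"

definition connected_graph :: "'a graph \<Rightarrow> bool" where
  "connected_graph G \<longleftrightarrow> graph G \<and> fst G \<noteq> {} \<and>
     (\<forall>u\<in>fst G. \<forall>v\<in>fst G. (adj G)\<^sup>*\<^sup>* u v)"

definition is_cycle_list :: "'a graph \<Rightarrow> 'a list \<Rightarrow> bool" where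
  "is_cycle_list G vs \<longleftrightarrow> 3 \<le> length vs \<and> distinct vs \<and> set vs \<subseteq> fst G \<and>
     (\<forall>i<length vs. adj G (vs ! i) (vs ! ((i + 1) mod length vs)))"

definition cycle_edges :: "'a list \<Rightarrow> 'a set set" where
  "cycle_edges vs = {{vs ! i, vs ! ((i + 1) mod length vs)} | i. i < length vs}"

text \<open>The cycles of G, each identified with its edge set (a cycle subgraph).\<close>
definition cycles :: "'a graph \<Rightarrow> 'a set set set" where
  "cycles G = {cycle_edges vs | vs. is_cycle_list G vs}"

definition unicyclic :: "'a graph \<Rightarrow> bool" where
  "unicyclic G \<longleftrightarrow> connected_graph G \<and> (\<exists>!C. C \<in> cycles G)"

definition is_tree :: "'a graph \<Rightarrow> bool" where
  "is_tree G \<longleftrightarrow> connected_graph G \<and> cycles G = {}"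

definition induced :: "'a graph \<Rightarrow> 'a set \<Rightarrow> 'a graph" where
  "induced G S = (S, {e \<in> snd G. e \<subseteq> S})"

definition component :: "'a graph \<Rightarrow> 'a \<Rightarrow> 'a graph" where
  "component G v = induced G {u \<in> fst G. (adj G)\<^sup>*\<^sup>* v u}"

definition pseudoforest :: "'a graph \<Rightarrow> bool" where
  "pseudoforest G \<longleftrightarrow> graph G \<and>
     (\<forall>v\<in>fst G. is_tree (component G v) \<or> unicyclic (component G v))"

definition Cycles :: "'a graph \<Rightarrow> 'a graph" where
  "Cycles H = induced H {v \<in> fst H. \<exists>vs. is_cycle_list H vs \<and> v \<in> set vs}"

definition interchangeable :: "'a graph \<Rightarrow> 'a \<Rightarrow> 'a \<Rightarrow> 'a \<Rightarrow> 'a \<Rightarrow> bool" where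
  "interchangeable G a b c d \<longleftrightarrow> {a, b} \<in> snd G \<and> {c, d} \<in> snd G \<and>
     {a, b} \<inter> {c, d} = {} \<and> {a, c} \<notin> snd G \<and> {b, d} \<notin> snd G"

definition two_switch :: "'a graph \<Rightarrow> 'a \<Rightarrow> 'a \<Rightarrow> 'a \<Rightarrow> 'a \<Rightarrow> 'a graph" where
  "two_switch G a b c d =
     (if interchangeable G a b c d
      then (fst G, (snd G - {{a, b}, {c, d}}) \<union> {{a, c}, {b, d}})
      else G)"

definition p_switch :: "'a graph \<Rightarrow> 'a \<Rightarrow> 'a \<Rightarrow> 'a \<Rightarrow> 'a \<Rightarrow> bool" where
  "p_switch G a b c d \<longleftrightarrow> pseudoforest G \<and> two_switch G a b c d \<noteq> G \<and>
     pseudoforest (two_switch G a b c d)"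

end

theory Submission
  imports Defs "HOL-Library.Transitive_Closure_Table"
begin

text \<open>
  Since both ends of {a, b} lie on the unique cycle of U, the edge {a, b} is on that cycle
  (otherwise it would be a chord and create a second cycle), so U - ab is a forest and the
  switched graph is the forest F = U - ab - cd plus the two edges ac and bd. Suppose some
  component of it contained two different cycles. As deleting ac and bd leaves a forest,
  each of ac, bd lies on one of them, and the ends of each are joined in F; since the two
  cycles share a component, a and b are joined as well. Then c - a - b - d is a walk in F,
  which together with cd would form a cycle in the forest U - ab.
\<close>

section \<open>Walks along edge sets\<close>

abbreviation reachable :: "'a set set \<Rightarrow> 'a \<Rightarrow> 'a \<Rightarrow> bool" where
  "reachable E \<equiv> (\<lambda>u w. {u, w} \<in> E)\<^sup>*\<^sup>*"

lemma adj_pair [simp]: "adj (V, E) = (\<lambda>u w. {u, w} \<in> E)"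
  by (simp add: adj_def fun_eq_iff)

lemma reachable_sym: "reachable E x y \<Longrightarrow> reachable E y x"
  by (rule sympD[OF symp_rtranclp]) (auto simp: symp_def insert_commute)

lemma rtranclp_lift:
  "R\<^sup>*\<^sup>* x y \<Longrightarrow> (\<And>u w. R u w \<Longrightarrow> S\<^sup>*\<^sup>* u w) \<Longrightarrow> S\<^sup>*\<^sup>* x y"
  by (induction rule: rtranclp_induct) (auto intro: rtranclp_trans)

lemma reachable_mono: "reachable E x y \<Longrightarrow> E \<subseteq> F \<Longrightarrow> reachable F x y"
  by (erule rtranclp_lift) auto

lemma reachable_insert_edge:
  assumes "reachable (insert {u, w} E) x y" and "reachable E u w"
  shows "reachable E x y"
  using assms(1)
proof (rule rtranclp_lift)
  fix p q assume "{p, q} \<in> insert {u, w} E"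
  then consider "{p, q} \<in> E" | "p = u" "q = w" | "p = w" "q = u" by (auto simp: doubleton_eq_iff)
  then show "reachable E p q"
  proof cases
    case 1 then show ?thesis by (simp add: r_into_rtranclp)
  next
    case 2 then show ?thesis using assms(2) by simp
  next
    case 3 then show ?thesis using reachable_sym[OF assms(2)] by simp
  qed
qed

lemma rtranclp_chain: "(\<And>j. j < k \<Longrightarrow> R (f j) (f (Suc j))) \<Longrightarrow> R\<^sup>*\<^sup>* (f 0) (f k)"
  by (induction k) (auto intro: rtranclp.rtrancl_into_rtrancl)

lemma rtrancl_path_nth:
  "rtrancl_path r x xs y \<Longrightarrow> i < length xs \<Longrightarrow> r ((x # xs) ! i) (xs ! i)"
proof (induction arbitrary: i rule: rtrancl_path.induct)
  case (step x y ys z)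
  then show ?case by (cases i) (auto elim: rtrancl_path.cases)
qed simp

lemma rtrancl_path_last: "rtrancl_path r x xs y \<Longrightarrow> last (x # xs) = y"
  by (induction rule: rtrancl_path.induct) auto

lemma mod_Suc_Suc_neq: "i < (n::nat) \<Longrightarrow> 3 \<le> n \<Longrightarrow> ((i + 1) mod n + 1) mod n \<noteq> i"
  by (cases "i + 1 < n"; cases "i + 2 < n") (auto simp: mod_if)

lemma mod_add_less_neq: "i < (n::nat) \<Longrightarrow> j + 1 < n \<Longrightarrow> (i + 1 + j) mod n \<noteq> i"
  by (cases "i + 1 + j < n") (auto simp: mod_if)

section \<open>Cycles\<close>

lemma graph_edgeD: "graph G \<Longrightarrow> {p, q} \<in> snd G \<Longrightarrow> p \<noteq> q \<and> p \<in> fst G \<and> q \<in> fst G"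
  unfolding graph_def by (metis doubleton_eq_iff)

lemma graph_subset_edges: "graph (V, E) \<Longrightarrow> F \<subseteq> E \<Longrightarrow> graph (V, F)"
  by (auto simp: graph_def)

lemma cycles_eq_empty_iff: "cycles G = {} \<longleftrightarrow> (\<forall>vs. \<not> is_cycle_list G vs)"
  by (auto simp: cycles_def)

lemma cycle_edges_subset: "is_cycle_list G vs \<Longrightarrow> cycle_edges vs \<subseteq> snd G"
  by (auto simp: is_cycle_list_def cycle_edges_def adj_def)

lemma is_cycle_list_mono:
  "is_cycle_list G vs \<Longrightarrow> set vs \<subseteq> fst H \<Longrightarrow> cycle_edges vs \<subseteq> snd H \<Longrightarrow> is_cycle_list H vs"
  by (auto simp: is_cycle_list_def cycle_edges_def adj_def)

lemma is_cycle_list_subset_edges: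
  "is_cycle_list (V, F) vs \<Longrightarrow> F \<subseteq> E \<Longrightarrow> is_cycle_list (V, E) vs"
  by (auto simp: is_cycle_list_def)

lemma is_cycle_list_restrict:
  "is_cycle_list (V, E) vs \<Longrightarrow> cycle_edges vs \<subseteq> F \<Longrightarrow> is_cycle_list (V, F) vs"
  by (rule is_cycle_list_mono[of "(V, E)"]) (auto simp: is_cycle_list_def)

lemma cycles_empty_mono: "cycles (V, E) = {} \<Longrightarrow> F \<subseteq> E \<Longrightarrow> cycles (V, F) = {}"
  by (meson cycles_eq_empty_iff is_cycle_list_subset_edges)

lemma cycle_edges_nth: "i < length vs \<Longrightarrow> {vs ! i, vs ! ((i + 1) mod length vs)} \<in> cycle_edges vs"
  unfolding cycle_edges_def by blast

lemma cycle_edges_endpoints: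
  assumes "vs \<noteq> []" and "e \<in> cycle_edges vs"
  shows "e \<subseteq> set vs"
proof -
  obtain i where "i < length vs" "e = {vs ! i, vs ! ((i + 1) mod length vs)}"
    using assms(2) unfolding cycle_edges_def by blast
  moreover have "(i + 1) mod length vs < length vs" using assms(1) by simp
  ultimately show ?thesis by simp
qed

lemma Union_cycle_edges:
  assumes "vs \<noteq> []"
  shows "\<Union> (cycle_edges vs) = set vs"
proof (intro equalityI subsetI)
  fix x assume "x \<in> \<Union> (cycle_edges vs)"
  then show "x \<in> set vs" using cycle_edges_endpoints[OF assms] by blast
next
  fix x assume "x \<in> set vs"
  then obtain i where "i < length vs" "x = vs ! i" by (auto simp: in_set_conv_nth)
  then show "x \<in> \<Union> (cycle_edges vs)" using cycle_edges_nth by blast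
qed

lemma cycle_edge_index_inj:
  assumes "is_cycle_list G vs" and "i < length vs" and "j < length vs"
    and "{vs ! i, vs ! ((i + 1) mod length vs)} = {vs ! j, vs ! ((j + 1) mod length vs)}"
  shows "i = j"
proof (rule ccontr)
  assume "i \<noteq> j"
  let ?n = "length vs"
  have dist: "distinct vs" and n: "3 \<le> ?n" using assms(1) by (auto simp: is_cycle_list_def)
  have "vs \<noteq> []" using assms(2) by auto
  then have i': "(i + 1) mod ?n < ?n" and j': "(j + 1) mod ?n < ?n" by simp_all
  have "vs ! i \<noteq> vs ! j" using nth_eq_iff_index_eq[OF dist assms(2,3)] \<open>i \<noteq> j\<close> by simp
  moreover have "vs ! i = vs ! j \<and> vs ! ((i + 1) mod ?n) = vs ! ((j + 1) mod ?n) \<or>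
      vs ! i = vs ! ((j + 1) mod ?n) \<and> vs ! ((i + 1) mod ?n) = vs ! j"
    using assms(4) by (simp only: doubleton_eq_iff)
  ultimately have "vs ! i = vs ! ((j + 1) mod ?n)" and "vs ! ((i + 1) mod ?n) = vs ! j" by simp_all
  from this(1) have i_eq: "i = (j + 1) mod ?n"
    by (simp only: nth_eq_iff_index_eq[OF dist assms(2) j'])
  from \<open>vs ! ((i + 1) mod ?n) = vs ! j\<close> have j_eq: "(i + 1) mod ?n = j"
    by (simp only: nth_eq_iff_index_eq[OF dist i' assms(3)])
  from i_eq have "((i + 1) mod ?n + 1) mod ?n = i" unfolding j_eq by (rule sym)
  with mod_Suc_Suc_neq[OF assms(2) n] show False by (rule notE)
qed

lemma cycle_vertices_reachable:
  assumes "x \<in> set vs" and "y \<in> set vs"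
  shows "reachable (cycle_edges vs) x y"
proof -
  have from_first: "reachable (cycle_edges vs) (vs ! 0) (vs ! k)" if "k < length vs" for k
  proof (rule rtranclp_chain)
    fix j assume "j < k"
    then show "{vs ! j, vs ! Suc j} \<in> cycle_edges vs"
      using cycle_edges_nth[of j vs] that by simp
  qed
  obtain i j where "i < length vs" "vs ! i = x" "j < length vs" "vs ! j = y"
    using assms by (auto simp: in_set_conv_nth)
  then have "reachable (cycle_edges vs) x (vs ! 0)" and "reachable (cycle_edges vs) (vs ! 0) y"
    using reachable_sym[OF from_first[of i]] from_first[of j] by auto
  then show ?thesis by (rule rtranclp_trans)
qed

lemma cycle_edge_reachable_around:
  assumes cycle: "is_cycle_list G vs" and pq: "{p, q} \<in> cycle_edges vs"
  shows "reachable (cycle_edges vs - {{p, q}}) p q"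
proof -
  let ?n = "length vs"
  obtain i where i: "i < ?n" and pq_eq: "{p, q} = {vs ! i, vs ! ((i + 1) mod ?n)}"
    using pq unfolding cycle_edges_def by blast
  have n: "3 \<le> ?n" using cycle by (simp add: is_cycle_list_def)
  define f where "f j = vs ! ((i + 1 + j) mod ?n)" for j
  have "reachable (cycle_edges vs - {{p, q}}) (f 0) (f (?n - 1))"
  proof (rule rtranclp_chain)
    fix j assume j: "j < ?n - 1"
    let ?m = "(i + 1 + j) mod ?n"
    have m: "?m < ?n" using i by (cases vs) simp_all
    have "?m \<noteq> i" using mod_add_less_neq[OF i] j by simp
    then have "{vs ! ?m, vs ! ((?m + 1) mod ?n)} \<noteq> {p, q}"
      using cycle_edge_index_inj[OF cycle m i] pq_eq by auto
    moreover have "f (Suc j) = vs ! ((?m + 1) mod ?n)" by (simp add: f_def mod_Suc_eq)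
    ultimately show "{f j, f (Suc j)} \<in> cycle_edges vs - {{p, q}}"
      using cycle_edges_nth[OF m] by (simp add: f_def)
  qed
  moreover have "f (?n - 1) = vs ! i"
  proof -
    have "i + 1 + (?n - 1) = i + ?n" using n by simp
    then show ?thesis using i by (simp add: f_def)
  qed
  ultimately have around: "reachable (cycle_edges vs - {{p, q}}) (vs ! ((i + 1) mod ?n)) (vs ! i)"
    by (simp add: f_def)
  from pq_eq consider "p = vs ! i" "q = vs ! ((i + 1) mod ?n)" | "p = vs ! ((i + 1) mod ?n)" "q = vs ! i"
    by (auto simp: doubleton_eq_iff)
  then show ?thesis
  proof cases
    case 1 then show ?thesis using reachable_sym[OF around] by simp
  next
    case 2 then show ?thesis using around by simp
  qed
qed

lemma is_cycle_list_of_path: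
  assumes g: "graph (V, E)" and x: "x \<in> V" and dist: "distinct (x # xs)" and len: "2 \<le> length xs"
    and step: "\<And>i. i < length xs \<Longrightarrow> {(x # xs) ! i, xs ! i} \<in> E" and closing: "{last xs, x} \<in> E"
  shows "is_cycle_list (V, E) (x # xs)"
  unfolding is_cycle_list_def
proof (intro conjI allI impI)
  show "3 \<le> length (x # xs)" "distinct (x # xs)" using len dist by simp_all
  show "set (x # xs) \<subseteq> fst (V, E)"
  proof
    fix z assume "z \<in> set (x # xs)"
    then obtain k where k: "k < length (x # xs)" "z = (x # xs) ! k" by (metis in_set_conv_nth)
    show "z \<in> fst (V, E)"
    proof (cases k)
      case (Suc i)
      then show ?thesis using graph_edgeD[OF g] step[of i] k by simp
    qed (simp add: x k)
  qed
next
  fix i assume "i < length (x # xs)"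
  then have "i < length xs \<or> i = length xs" by (simp add: less_Suc_eq)
  then show "adj (V, E) ((x # xs) ! i) ((x # xs) ! ((i + 1) mod length (x # xs)))"
  proof
    assume "i < length xs"
    then show ?thesis using step by simp
  next
    assume "i = length xs"
    moreover have "(x # xs) ! length xs = last xs" using len by (cases xs rule: rev_cases) auto
    ultimately show ?thesis using closing by (simp add: insert_commute)
  qed
qed

lemma cycle_through_edge:
  assumes g: "graph (V, E)" and xy: "{x, y} \<in> E" and reach: "reachable (E - {{x, y}}) x y"
  shows "\<exists>vs. is_cycle_list (V, E) vs \<and> {x, y} \<in> cycle_edges vs"
proof -
  have "x \<noteq> y" "x \<in> V" using graph_edgeD[OF g] xy by auto
  obtain xs0 where "rtrancl_path (\<lambda>u w. {u, w} \<in> E - {{x, y}}) x xs0 y"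
    using reach by (auto simp: rtranclp_eq_rtrancl_path)
  then obtain xs where path: "rtrancl_path (\<lambda>u w. {u, w} \<in> E - {{x, y}}) x xs y"
    and dist: "distinct (x # xs)"
    by (rule rtrancl_path_distinct)
  have step: "{(x # xs) ! i, xs ! i} \<in> E - {{x, y}}" if "i < length xs" for i
    using rtrancl_path_nth[OF path that] by simp
  have "last (x # xs) = y" by (rule rtrancl_path_last[OF path])
  with \<open>x \<noteq> y\<close> have "xs \<noteq> []" and last: "last xs = y" by auto
  moreover have "xs \<noteq> [y]" using step[of 0] by auto
  ultimately have len: "2 \<le> length xs" by (cases xs) (auto simp: Suc_le_eq)
  have "{last xs, x} \<in> E" using xy last by (simp add: insert_commute)
  then have "is_cycle_list (V, E) (x # xs)"
    by (rule is_cycle_list_of_path[OF g \<open>x \<in> V\<close> dist len, rotated]) (use step in blast)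
  moreover have "(x # xs) ! length xs = y" using last \<open>xs \<noteq> []\<close> by (cases xs rule: rev_cases) auto
  then have "{x, y} \<in> cycle_edges (x # xs)"
    using cycle_edges_nth[of "length xs" "x # xs"] by (simp add: insert_commute)
  ultimately show ?thesis by blast
qed

lemma acyclic_edge_not_reachable:
  assumes "graph (V, E)" and "cycles (V, E) = {}" and "{x, y} \<in> E"
  shows "\<not> reachable (E - {{x, y}}) x y"
  using cycle_through_edge[OF assms(1,3)] assms(2) by (auto simp: cycles_eq_empty_iff)

lemma cycle_edge_endpoints_reachable:
  assumes "is_cycle_list (V, E) vs" and "{p, q} \<in> cycle_edges vs"
  shows "reachable (E - {{p, q}}) p q"
proof (rule reachable_mono[OF cycle_edge_reachable_around[OF assms]])
  show "cycle_edges vs - {{p, q}} \<subseteq> E - {{p, q}}" using cycle_edges_subset[OF assms(1)] by auto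
qed

lemma edge_on_every_cycle:
  assumes "cycles (V, E - {e}) = {}" and "is_cycle_list (V, E) vs"
  shows "e \<in> cycle_edges vs"
proof (rule ccontr)
  assume "e \<notin> cycle_edges vs"
  then have "is_cycle_list (V, E - {e}) vs"
    using cycle_edges_subset[OF assms(2)] by (intro is_cycle_list_restrict[OF assms(2)]) auto
  then show False using assms(1) by (simp add: cycles_eq_empty_iff)
qed

lemma cycle_edges_subset_of_acyclic_minus_edge:
  assumes g: "graph (V, E)" and acyclic: "cycles (V, E - {e}) = {}"
    and vs: "is_cycle_list (V, E) vs" and ws: "is_cycle_list (V, E) ws"
  shows "cycle_edges vs \<subseteq> cycle_edges ws"
proof
  fix f assume f: "f \<in> cycle_edges vs"
  show "f \<in> cycle_edges ws"
  proof (rule ccontr)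
    assume f_ws: "f \<notin> cycle_edges ws"
    have e_ws: "e \<in> cycle_edges ws" using edge_on_every_cycle[OF acyclic ws] .
    have f_E: "f \<in> E - {e}" using f f_ws e_ws cycle_edges_subset[OF vs, unfolded snd_conv] by blast
    obtain p q where f_eq: "f = {p, q}" using f unfolding cycle_edges_def by blast
    obtain x y where e_eq: "e = {x, y}" using e_ws unfolding cycle_edges_def by blast
    let ?F = "E - {e} - {f}"
    have "reachable (cycle_edges ws - {e}) x y"
      using cycle_edge_reachable_around[OF ws e_ws[unfolded e_eq]] unfolding e_eq .
    then have "reachable ?F x y"
      by (rule reachable_mono) (use cycle_edges_subset[OF ws, unfolded snd_conv] f_ws in blast)
    moreover have "reachable (cycle_edges vs - {f}) p q"
      using cycle_edge_reachable_around[OF vs f[unfolded f_eq]] unfolding f_eq .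
    then have "reachable (insert e ?F) p q"
      by (rule reachable_mono) (use cycle_edges_subset[OF vs, unfolded snd_conv] in blast)
    ultimately have "reachable ?F p q" unfolding e_eq by (rule reachable_insert_edge[rotated])
    moreover have "graph (V, E - {e})" using g by (rule graph_subset_edges) blast
    ultimately show False
      using acyclic_edge_not_reachable[OF _ acyclic f_E[unfolded f_eq]] unfolding f_eq by blast
  qed
qed

lemma cycle_edges_eq_of_acyclic_minus_edge:
  assumes "graph (V, E)" and "cycles (V, E - {e}) = {}"
    and "is_cycle_list (V, E) vs" and "is_cycle_list (V, E) ws"
  shows "cycle_edges vs = cycle_edges ws"
  using cycle_edges_subset_of_acyclic_minus_edge[OF assms(1,2)] assms(3,4) by blast

section \<open>Components and pseudoforests\<close>

lemma adj_rtranclp_sym: "(adj G)\<^sup>*\<^sup>* x y \<Longrightarrow> (adj G)\<^sup>*\<^sup>* y x"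
  by (rule sympD[OF symp_rtranclp]) (auto simp: symp_def adj_def insert_commute)

lemma graph_induced:
  assumes g: "graph G" and S: "S \<subseteq> fst G"
  shows "graph (induced G S)"
  unfolding graph_def induced_def fst_conv snd_conv
proof (intro conjI ballI)
  show "finite S" using g finite_subset[OF S] by (simp add: graph_def)
  fix e assume "e \<in> {e \<in> snd G. e \<subseteq> S}"
  moreover obtain x y where "x \<noteq> y" "e = {x, y}" if "e \<in> snd G" using g unfolding graph_def by blast
  ultimately show "\<exists>x y. x \<noteq> y \<and> e = {x, y} \<and> x \<in> S \<and> y \<in> S" by blast
qed

lemma component_rtranclp:
  assumes "graph G" and "(adj G)\<^sup>*\<^sup>* v u"
  shows "(adj (component G v))\<^sup>*\<^sup>* v u"
  using assms(2)
proof (induction rule: rtranclp_induct)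
  case (step z u)
  have "z \<in> fst G" "u \<in> fst G" using graph_edgeD[OF assms(1)] step.hyps(2) by (auto simp: adj_def)
  moreover have "(adj G)\<^sup>*\<^sup>* v u" using step.hyps by (rule rtranclp.rtrancl_into_rtrancl)
  ultimately have "adj (component G v) z u"
    using step.hyps by (auto simp: adj_def component_def induced_def)
  with step.IH show ?case by (rule rtranclp.rtrancl_into_rtrancl)
qed simp

lemma connected_component:
  assumes g: "graph G" and v: "v \<in> fst G"
  shows "connected_graph (component G v)"
  unfolding connected_graph_def
proof (intro conjI ballI)
  show "graph (component G v)" unfolding component_def by (rule graph_induced[OF g]) blast
  show "fst (component G v) \<noteq> {}" using v by (auto simp: component_def induced_def)
  fix u w assume "u \<in> fst (component G v)" "w \<in> fst (component G v)"
  then have "(adj G)\<^sup>*\<^sup>* v u" and "(adj G)\<^sup>*\<^sup>* v w" by (auto simp: component_def induced_def)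
  from this(1) have "(adj (component G v))\<^sup>*\<^sup>* u v"
    by (rule adj_rtranclp_sym[OF component_rtranclp[OF g]])
  also from \<open>(adj G)\<^sup>*\<^sup>* v w\<close> have "(adj (component G v))\<^sup>*\<^sup>* v w"
    by (rule component_rtranclp[OF g])
  finally show "(adj (component G v))\<^sup>*\<^sup>* u w" .
qed

lemma is_cycle_list_component:
  assumes "is_cycle_list (component G v) vs"
  shows "is_cycle_list G vs" and "set vs \<subseteq> {u. (adj G)\<^sup>*\<^sup>* v u}"
proof -
  show "is_cycle_list G vs"
    using assms cycle_edges_subset[OF assms]
    by (intro is_cycle_list_mono[OF assms]) (auto simp: is_cycle_list_def component_def induced_def)
  show "set vs \<subseteq> {u. (adj G)\<^sup>*\<^sup>* v u}"
    using assms by (auto simp: is_cycle_list_def component_def induced_def)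
qed

lemma pseudoforestI:
  assumes g: "graph G"
    and unique: "\<And>v vs ws. is_cycle_list G vs \<Longrightarrow> is_cycle_list G ws \<Longrightarrow>
      set vs \<union> set ws \<subseteq> {u. (adj G)\<^sup>*\<^sup>* v u} \<Longrightarrow> cycle_edges vs = cycle_edges ws"
  shows "pseudoforest G"
  unfolding pseudoforest_def
proof (intro conjI g ballI)
  fix v assume v: "v \<in> fst G"
  have "C = C'" if cycles: "C \<in> cycles (component G v)" "C' \<in> cycles (component G v)" for C C'
  proof -
    obtain vs ws where C: "C = cycle_edges vs" "is_cycle_list (component G v) vs"
      and C': "C' = cycle_edges ws" "is_cycle_list (component G v) ws"
      using cycles by (auto simp: cycles_def)
    show ?thesis
      unfolding C C' using is_cycle_list_component[OF C(2)] is_cycle_list_component[OF C'(2)]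
      by (intro unique) auto
  qed
  then have "cycles (component G v) = {} \<or> (\<exists>!C. C \<in> cycles (component G v))" by blast
  then show "is_tree (component G v) \<or> unicyclic (component G v)"
    using connected_component[OF g v] by (auto simp: is_tree_def unicyclic_def)
qed

lemma unicyclic_cycle_edges_eq:
  "unicyclic G \<Longrightarrow> is_cycle_list G vs \<Longrightarrow> is_cycle_list G ws \<Longrightarrow> cycle_edges vs = cycle_edges ws"
  unfolding unicyclic_def cycles_def by blast

lemma unicyclic_pseudoforest:
  assumes "unicyclic G"
  shows "pseudoforest G"
proof (rule pseudoforestI)
  show "graph G" using assms by (simp add: unicyclic_def connected_graph_def)
  fix v vs ws assume "is_cycle_list G vs" "is_cycle_list G ws"
  then show "cycle_edges vs = cycle_edges ws" by (rule unicyclic_cycle_edges_eq[OF assms])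
qed

lemma chord_imp_cycle_through:
  assumes g: "graph (V, E)" and vs: "is_cycle_list (V, E) vs"
    and ab: "{a, b} \<in> E" and "a \<in> set vs" and "b \<in> set vs" and chord: "{a, b} \<notin> cycle_edges vs"
  shows "\<exists>ws. is_cycle_list (V, E) ws \<and> {a, b} \<in> cycle_edges ws"
proof (rule cycle_through_edge[OF g ab])
  show "reachable (E - {{a, b}}) a b"
    using cycle_vertices_reachable[OF \<open>a \<in> set vs\<close> \<open>b \<in> set vs\<close>]
    by (rule reachable_mono) (use cycle_edges_subset[OF vs, unfolded snd_conv] chord in blast)
qed

lemma unicyclic_Cycles_edge_acyclic:
  assumes uc: "unicyclic (V, E)" and ab: "{a, b} \<in> snd (Cycles (V, E))"
  shows "cycles (V, E - {{a, b}}) = {}"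
proof -
  have g: "graph (V, E)" using uc by (simp add: unicyclic_def connected_graph_def)
  obtain vs where vs: "is_cycle_list (V, E) vs" using uc by (auto simp: unicyclic_def cycles_def)
  have same: "cycle_edges ws = cycle_edges vs" if "is_cycle_list (V, E) ws" for ws
    using unicyclic_cycle_edges_eq[OF uc that vs] .
  have on_vs: "z \<in> set vs" if z: "z \<in> {a, b}" for z
  proof -
    obtain ws where ws: "is_cycle_list (V, E) ws" "z \<in> set ws"
      using ab z by (auto simp: Cycles_def induced_def)
    have "ws \<noteq> []" "vs \<noteq> []" using ws(1) vs by (auto simp: is_cycle_list_def)
    then have "set ws = set vs"
      using Union_cycle_edges same[OF ws(1)] by metis
    then show ?thesis using ws(2) by simp
  qed
  have ab_E: "{a, b} \<in> E" using ab by (simp add: Cycles_def induced_def)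
  have ab_vs: "{a, b} \<in> cycle_edges vs"
  proof (rule ccontr)
    assume "{a, b} \<notin> cycle_edges vs"
    with chord_imp_cycle_through[OF g vs ab_E] on_vs obtain ws
      where "is_cycle_list (V, E) ws" "{a, b} \<in> cycle_edges ws" by blast
    with same \<open>{a, b} \<notin> cycle_edges vs\<close> show False by blast
  qed
  show ?thesis unfolding cycles_eq_empty_iff
  proof (intro allI notI)
    fix ws assume ws: "is_cycle_list (V, E - {{a, b}}) ws"
    then have "{a, b} \<in> cycle_edges ws"
      using same[OF is_cycle_list_subset_edges[OF ws]] ab_vs by blast
    then show False using cycle_edges_subset[OF ws] by auto
  qed
qed

section \<open>Forests plus two edges\<close>

lemma edge_on_distinct_cycles:
  assumes g: "graph (V, E)" and acyclic: "cycles (V, E - {e, f}) = {}"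
    and vs: "is_cycle_list (V, E) vs" and ws: "is_cycle_list (V, E) ws"
    and distinct: "cycle_edges vs \<noteq> cycle_edges ws"
  shows "f \<in> cycle_edges vs \<union> cycle_edges ws"
proof (rule ccontr)
  assume f: "f \<notin> cycle_edges vs \<union> cycle_edges ws"
  have "graph (V, E - {f})" using g by (rule graph_subset_edges) blast
  moreover have "E - {f} - {e} = E - {e, f}" by blast
  then have "cycles (V, E - {f} - {e}) = {}" using acyclic by simp
  moreover have "is_cycle_list (V, E - {f}) vs"
    by (rule is_cycle_list_restrict[OF vs]) (use f cycle_edges_subset[OF vs] in auto)
  moreover have "is_cycle_list (V, E - {f}) ws"
    by (rule is_cycle_list_restrict[OF ws]) (use f cycle_edges_subset[OF ws] in auto)
  ultimately have "cycle_edges vs = cycle_edges ws" by (rule cycle_edges_eq_of_acyclic_minus_edge)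
  with distinct show False ..
qed

lemma endpoints_reachable_of_distinct_cycles:
  assumes g: "graph (V, E)" and acyclic: "cycles (V, E - {e, {p, q}}) = {}"
    and vs: "is_cycle_list (V, E) vs" and ws: "is_cycle_list (V, E) ws"
    and distinct: "cycle_edges vs \<noteq> cycle_edges ws"
  shows "reachable (E - {e, {p, q}}) p q"
proof -
  have "cycles (V, E - {e}) \<noteq> {}"
    using cycle_edges_eq_of_acyclic_minus_edge[OF g _ vs ws] distinct by blast
  then obtain us where us: "is_cycle_list (V, E - {e}) us" by (auto simp: cycles_eq_empty_iff)
  have minus: "E - {e} - {{p, q}} = E - {e, {p, q}}" by blast
  have "cycles (V, E - {e} - {{p, q}}) = {}" using acyclic unfolding minus .
  from cycle_edge_endpoints_reachable[OF us edge_on_every_cycle[OF this us]]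
  show ?thesis unfolding minus .
qed

lemma cycle_edges_eq_of_acyclic_minus_two_edges:
  assumes g: "graph (V, E)" and acyclic: "cycles (V, E - {{a, c}, {b, d}}) = {}"
    and separated: "\<not> reachable (E - {{a, c}, {b, d}}) c d"
    and vs: "is_cycle_list (V, E) vs" and ws: "is_cycle_list (V, E) ws"
    and same_component: "set vs \<union> set ws \<subseteq> {u. reachable E v u}"
  shows "cycle_edges vs = cycle_edges ws"
proof (rule ccontr)
  let ?F = "E - {{a, c}, {b, d}}"
  assume distinct: "cycle_edges vs \<noteq> cycle_edges ws"
  have acyclic': "cycles (V, E - {{b, d}, {a, c}}) = {}" using acyclic by (simp add: insert_commute)
  have ac: "reachable ?F a c"
    using endpoints_reachable_of_distinct_cycles[OF g acyclic' vs ws distinct] by (simp add: insert_commute)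
  have bd: "reachable ?F b d" using endpoints_reachable_of_distinct_cycles[OF g acyclic vs ws distinct] .
  have "vs \<noteq> []" "ws \<noteq> []" using vs ws by (auto simp: is_cycle_list_def)
  then have "\<Union> (cycle_edges vs \<union> cycle_edges ws) = set vs \<union> set ws" by (simp add: Union_cycle_edges)
  then have "{a, c} \<union> {b, d} \<subseteq> set vs \<union> set ws"
    using edge_on_distinct_cycles[OF g acyclic vs ws distinct]
      edge_on_distinct_cycles[OF g acyclic' vs ws distinct] by blast
  then have "reachable E v a" and "reachable E v b" using same_component by auto
  from this(1) have "reachable E a v" by (rule reachable_sym)
  also have "reachable E v b" by fact
  finally have "reachable (insert {a, c} (insert {b, d} ?F)) a b" by (rule reachable_mono) blast
  moreover have "reachable (insert {b, d} ?F) a c" using ac by (rule reachable_mono) blast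
  ultimately have "reachable (insert {b, d} ?F) a b" by (rule reachable_insert_edge)
  then have "reachable ?F a b" using bd by (rule reachable_insert_edge)
  have "reachable ?F c a" using ac by (rule reachable_sym)
  also have "reachable ?F a b" by fact
  also have "reachable ?F b d" by (fact bd)
  finally show False using separated by contradiction
qed

lemma pseudoforest_switch_of_acyclic_minus_edge:
  assumes g: "graph (V, E)" and ab: "{a, b} \<in> E" and cd: "{c, d} \<in> E"
    and disjoint: "{a, b} \<inter> {c, d} = {}" and acyclic: "cycles (V, E - {{a, b}}) = {}"
  shows "pseudoforest (V, E - {{a, b}, {c, d}} \<union> {{a, c}, {b, d}})"
proof -
  define E' where "E' = E - {{a, b}, {c, d}} \<union> {{a, c}, {b, d}}"
  have g': "graph (V, E')"
    using g graph_edgeD[OF g, of a b] graph_edgeD[OF g, of c d] ab cd disjoint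
    unfolding graph_def E'_def by auto
  have E'_minus: "E' - {{a, c}, {b, d}} \<subseteq> E - {{a, b}} - {{c, d}}" by (auto simp: E'_def)
  have acyclic': "cycles (V, E' - {{a, c}, {b, d}}) = {}"
    using cycles_empty_mono[OF acyclic] E'_minus by blast
  have "graph (V, E - {{a, b}})" using g by (rule graph_subset_edges) blast
  moreover have "{c, d} \<in> E - {{a, b}}" using cd disjoint by auto
  ultimately have "\<not> reachable (E - {{a, b}} - {{c, d}}) c d"
    by (rule acyclic_edge_not_reachable[OF _ acyclic])
  then have separated: "\<not> reachable (E' - {{a, c}, {b, d}}) c d"
    using reachable_mono[OF _ E'_minus] by blast
  show ?thesis unfolding E'_def[symmetric]
  proof (rule pseudoforestI[OF g'])
    fix v vs ws
    assume "is_cycle_list (V, E') vs" "is_cycle_list (V, E') ws"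
      and "set vs \<union> set ws \<subseteq> {u. (adj (V, E'))\<^sup>*\<^sup>* v u}"
    then show "cycle_edges vs = cycle_edges ws"
      by (intro cycle_edges_eq_of_acyclic_minus_two_edges[OF g' acyclic' separated]) simp_all
  qed
qed

theorem lemma4p4:
  fixes U :: "'a graph" and a b c d :: 'a
  assumes "unicyclic U"
    and "{a, b} \<in> snd (Cycles U)" and "{c, d} \<in> snd (Cycles U)"
    and "two_switch U a b c d \<noteq> U"
  shows "p_switch U a b c d"
proof -
  obtain V E where U: "U = (V, E)" by fastforce
  have "interchangeable U a b c d" using assms(4) by (metis two_switch_def)
  then have ab: "{a, b} \<in> E" and cd: "{c, d} \<in> E" and disjoint: "{a, b} \<inter> {c, d} = {}"
    and switch: "two_switch U a b c d = (V, E - {{a, b}, {c, d}} \<union> {{a, c}, {b, d}})"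
    by (simp_all add: U interchangeable_def two_switch_def)
  have g: "graph (V, E)" using assms(1) U by (simp add: unicyclic_def connected_graph_def)
  have "cycles (V, E - {{a, b}}) = {}"
    using unicyclic_Cycles_edge_acyclic assms(1,2) unfolding U .
  then have "pseudoforest (two_switch U a b c d)"
    unfolding switch by (rule pseudoforest_switch_of_acyclic_minus_edge[OF g ab cd disjoint])
  then show ?thesis
    using unicyclic_pseudoforest[OF assms(1)] assms(4) by (simp add: p_switch_def)
qed

end
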